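(* Let $H=T\cup C_n$ be a Halin graph whose outer cycle $C_n$ has odd length $n$, and suppose $H$ is not a wheel. Then $AT(H)=3$.
   Context: All graphs are finite and simple. A Halin graph $H=T\cup C_n$ is a plane graph obtained from a plane tree $T$ having no vertex of degree two and at least one vertex of degree at least three, by adding a cycle $C_n$ (the outer cycle) that connects all the leaves of $T$ in the cyclic order determined by the planar drawing of $T$. The vertices not on $C_n$ are inner vertices; a wheel is a Halin graph with exactly one inner vertex. For a digraph $D$, an Eulerian subdigraph is a spanning subdigraph (a subset of the arcs, possibly empty) in which every vertex has indegree equal to outdegree; it is even or odd according to the parity of its number of arcs. The Alon–Tarsi number $AT(G)$ is the smallest integer $k$ such that $G$ has an orientation $D$ with maximum outdegree at most $k-1$ for which the numbers of even and odd Eulerian subdigraphs of $D$ differ. *)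

theory Defs
  imports Main
begin

definition simple_graph :: "'a set \<Rightarrow> 'a set set \<Rightarrow> bool" where
  "simple_graph V E \<longleftrightarrow> finite V \<and>
     (\<forall>e\<in>E. \<exists>u v. e = {u, v} \<and> u \<noteq> v \<and> u \<in> V \<and> v \<in> V)"

definition nbrs :: "'a set set \<Rightarrow> 'a \<Rightarrow> 'a set" where
  "nbrs E v = {u. {u, v} \<in> E}"

definition deg :: "'a set set \<Rightarrow> 'a \<Rightarrow> nat" where
  "deg E v = card (nbrs E v)"

definition graph_connected :: "'a set \<Rightarrow> 'a set set \<Rightarrow> bool" where
  "graph_connected V E \<longleftrightarrow>
     (\<forall>u\<in>V. \<forall>v\<in>V. (u, v) \<in> {(x, y). {x, y} \<in> E}\<^sup>*)"

definition is_tree :: "'a set \<Rightarrow> 'a set set \<Rightarrow> bool" where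
  "is_tree V E \<longleftrightarrow> simple_graph V E \<and> V \<noteq> {} \<and> graph_connected V E \<and>
     card E = card V - 1"

definition leaves :: "'a set \<Rightarrow> 'a set set \<Rightarrow> 'a set" where
  "leaves V E = {v \<in> V. deg E v = 1}"

text \<open>A rotation system assigns to each vertex v a cyclic permutation rot v of its
  neighbourhood (every rotation system of a tree is a plane embedding, and every plane
  embedding arises this way).\<close>
definition rotation_system :: "'a set \<Rightarrow> 'a set set \<Rightarrow> ('a \<Rightarrow> 'a \<Rightarrow> 'a) \<Rightarrow> bool" where
  "rotation_system V E rot \<longleftrightarrow>
     (\<forall>v\<in>V. bij_betw (rot v) (nbrs E v) (nbrs E v) \<and>
        (\<forall>u\<in>nbrs E v. \<forall>w\<in>nbrs E v. \<exists>k. (rot v ^^ k) u = w))"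

text \<open>Face-tracing step on darts: after traversing dart (u,v), continue with (v, rot v u).\<close>
definition face_step :: "('a \<Rightarrow> 'a \<Rightarrow> 'a) \<Rightarrow> 'a \<times> 'a \<Rightarrow> 'a \<times> 'a" where
  "face_step rot d = (snd d, rot (snd d) (fst d))"

text \<open>The leaf following leaf l (entered via dart (p,l)) along the boundary walk is l'.\<close>
definition next_leaf :: "'a set \<Rightarrow> 'a set set \<Rightarrow> ('a \<Rightarrow> 'a \<Rightarrow> 'a) \<Rightarrow> 'a \<Rightarrow> 'a \<Rightarrow> bool" where
  "next_leaf V E rot l l' \<longleftrightarrow>
     (\<exists>p. {p, l} \<in> E \<and>
        (\<exists>k>0. snd ((face_step rot ^^ k) (p, l)) = l' \<and>
           (\<forall>j. 0 < j \<and> j < k \<longrightarrow> snd ((face_step rot ^^ j) (p, l)) \<notin> leaves V E)))"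

definition cycle_edges :: "(nat \<Rightarrow> 'a) \<Rightarrow> nat \<Rightarrow> 'a set set" where
  "cycle_edges c n = {{c i, c (Suc i mod n)} | i. i < n}"

text \<open>Halin graph T \<union> C_n: T = (V, ET) a tree without degree-2 vertices and with a vertex of
  degree at least 3; c enumerates the leaves of T in the cyclic order determined by some
  plane drawing (rotation system) of T; H has edges ET \<union> cycle_edges c n.\<close>
definition is_halin :: "'a set \<Rightarrow> 'a set set \<Rightarrow> (nat \<Rightarrow> 'a) \<Rightarrow> nat \<Rightarrow> bool" where
  "is_halin V ET c n \<longleftrightarrow>
     is_tree V ET \<and> (\<forall>v\<in>V. deg ET v \<noteq> 2) \<and> (\<exists>v\<in>V. 3 \<le> deg ET v) \<and>
     bij_betw c {..<n} (leaves V ET) \<and>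
     (\<exists>rot. rotation_system V ET rot \<and>
        (\<forall>i<n. next_leaf V ET rot (c i) (c (Suc i mod n))))"

definition inner_vertices :: "'a set \<Rightarrow> 'a set set \<Rightarrow> 'a set" where
  "inner_vertices V ET = V - leaves V ET"

definition is_wheel_halin :: "'a set \<Rightarrow> 'a set set \<Rightarrow> bool" where
  "is_wheel_halin V ET \<longleftrightarrow> card (inner_vertices V ET) = 1"

definition orientation :: "'a set \<Rightarrow> 'a set set \<Rightarrow> ('a \<times> 'a) set \<Rightarrow> bool" where
  "orientation V E D \<longleftrightarrow>
     (\<forall>(u, v)\<in>D. {u, v} \<in> E) \<and>
     (\<forall>u v. {u, v} \<in> E \<longrightarrow> ((u, v) \<in> D \<longleftrightarrow> (v, u) \<notin> D))"

definition outdeg :: "('a \<times> 'a) set \<Rightarrow> 'a \<Rightarrow> nat" where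
  "outdeg D v = card {w. (v, w) \<in> D}"

definition indeg :: "('a \<times> 'a) set \<Rightarrow> 'a \<Rightarrow> nat" where
  "indeg D v = card {w. (w, v) \<in> D}"

definition eulerian_sub :: "('a \<times> 'a) set \<Rightarrow> ('a \<times> 'a) set \<Rightarrow> bool" where
  "eulerian_sub D A \<longleftrightarrow> A \<subseteq> D \<and> (\<forall>v. indeg A v = outdeg A v)"

definition num_even_eulerian :: "('a \<times> 'a) set \<Rightarrow> nat" where
  "num_even_eulerian D = card {A. eulerian_sub D A \<and> even (card A)}"

definition num_odd_eulerian :: "('a \<times> 'a) set \<Rightarrow> nat" where
  "num_odd_eulerian D = card {A. eulerian_sub D A \<and> odd (card A)}"

definition AT :: "'a set \<Rightarrow> 'a set set \<Rightarrow> nat" where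
  "AT V E = (LEAST k. \<exists>D. orientation V E D \<and> (\<forall>v\<in>V. outdeg D v + 1 \<le> k) \<and>
                        num_even_eulerian D \<noteq> num_odd_eulerian D)"

end

(*
  Since H has card V - 1 + n > card V edges, every orientation has a vertex of outdegree at
  least 2, so AT(H) >= 3.

  For the upper bound root T at an inner vertex r and let w be an inner vertex farthest from r:
  all neighbours of w except its parent are leaves. Relabel the leaves cyclically so that c 0 is
  adjacent to w and c (n - 1) is not. Orient the edges between inner vertices towards r, every
  leaf edge towards the inner vertex except for w -> c 0, and the outer cycle either as a directed
  cycle or acyclically. Every outdegree is at most 2, and a height function that never increases
  along arcs confines every Eulerian subdigraph to the outer cycle and the arcs between w and its
  leaves. There the Eulerian subdigraphs are the empty one, the directed outer cycle (in the
  cyclic case only) and, for every leaf c j of w other than c 0, the cycle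
  c 0 -> c 1 -> ... -> c j -> w -> c 0. Orienting the outer cycle according to the parity of the
  number of these leaves makes the number of Eulerian subdigraphs odd, so the even and the odd
  ones cannot be equinumerous.
*)
theory Submission
  imports Defs
begin

section \<open>Balanced arc sets\<close>

definition balanced :: "('a \<times> 'a) set \<Rightarrow> bool" where
  "balanced A \<longleftrightarrow> (\<forall>v. indeg A v = outdeg A v)"

lemma eulerian_sub_iff_balanced: "eulerian_sub D A \<longleftrightarrow> A \<subseteq> D \<and> balanced A"
  unfolding eulerian_sub_def balanced_def by simp

lemma balanced_empty: "balanced {}"
  unfolding balanced_def indeg_def outdeg_def by simp

lemma finite_out_nbrs: "finite A \<Longrightarrow> finite {y. (x, y) \<in> A}"
  by (rule finite_subset[of _ "snd ` A"]) force+

lemma finite_in_nbrs: "finite A \<Longrightarrow> finite {y. (y, x) \<in> A}"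
  by (rule finite_subset[of _ "fst ` A"]) force+

lemma outdeg_converse: "outdeg (A\<inverse>) v = indeg A v"
  unfolding outdeg_def indeg_def by simp

lemma balanced_out_arc:
  assumes "finite A" "balanced A" "(x, v) \<in> A"
  shows "\<exists>y. (v, y) \<in> A"
proof -
  have "indeg A v \<noteq> 0"
    unfolding indeg_def using assms(3) finite_in_nbrs[OF assms(1)] by auto
  hence "outdeg A v \<noteq> 0" using assms(2) unfolding balanced_def by simp
  thus ?thesis unfolding outdeg_def by (metis Collect_empty_eq card.empty)
qed

lemma balanced_in_arc:
  assumes "finite A" "balanced A" "(v, y) \<in> A"
  shows "\<exists>x. (x, v) \<in> A"
proof -
  have "outdeg A v \<noteq> 0"
    unfolding outdeg_def using assms(3) finite_out_nbrs[OF assms(1)] by auto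
  hence "indeg A v \<noteq> 0" using assms(2) unfolding balanced_def by simp
  thus ?thesis unfolding indeg_def by (metis Collect_empty_eq card.empty)
qed

lemma balanced_Diff:
  assumes "finite A" "Z \<subseteq> A" "balanced A" "balanced Z"
  shows "balanced (A - Z)"
proof -
  have "indeg (A - Z) v = indeg A v - indeg Z v" "outdeg (A - Z) v = outdeg A v - outdeg Z v" for v
  proof -
    have "{x. (x, v) \<in> A - Z} = {x. (x, v) \<in> A} - {x. (x, v) \<in> Z}"
      "{y. (v, y) \<in> A - Z} = {y. (v, y) \<in> A} - {y. (v, y) \<in> Z}" by blast+
    moreover have "{x. (x, v) \<in> Z} \<subseteq> {x. (x, v) \<in> A}" "{y. (v, y) \<in> Z} \<subseteq> {y. (v, y) \<in> A}"
      using assms(2) by blast+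
    ultimately show "indeg (A - Z) v = indeg A v - indeg Z v" "outdeg (A - Z) v = outdeg A v - outdeg Z v"
      unfolding indeg_def outdeg_def
      using finite_in_nbrs[OF assms(1)] finite_out_nbrs[OF assms(1)] by (metis card_Diff_subset finite_subset)+
  qed
  thus ?thesis using assms(3,4) unfolding balanced_def by simp
qed

lemma sum_arcs_fst:
  assumes "finite X" "A \<subseteq> X \<times> X"
  shows "(\<Sum>a\<in>A. g (fst a)) = (\<Sum>x\<in>X. of_nat (outdeg A x) * g x)"
proof -
  have "A = Sigma X (\<lambda>x. {y. (x, y) \<in> A})" using assms(2) by auto
  moreover have "finite {y. (x, y) \<in> A}" for x
    using assms by (intro finite_out_nbrs finite_subset[OF assms(2)]) auto
  ultimately have "(\<Sum>a\<in>A. g (fst a)) = (\<Sum>x\<in>X. \<Sum>y\<in>{y. (x, y) \<in> A}. g x)"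
    using sum.Sigma[OF assms(1), of "\<lambda>x. {y. (x, y) \<in> A}" "\<lambda>x y. g x"]
    by (simp add: case_prod_beta)
  thus ?thesis unfolding outdeg_def by simp
qed

lemma balanced_sum_fst_eq_sum_snd:
  fixes g :: "'a \<Rightarrow> 'b::semiring_1"
  assumes "finite A" "balanced A"
  shows "(\<Sum>a\<in>A. g (fst a)) = (\<Sum>a\<in>A. g (snd a))"
proof -
  define X where "X = fst ` A \<union> snd ` A"
  have X: "finite X" "A \<subseteq> X \<times> X" "A\<inverse> \<subseteq> X \<times> X"
    unfolding X_def using assms(1) by force+
  have "(\<Sum>a\<in>A. g (snd a)) = (\<Sum>a\<in>A\<inverse>. g (fst a))"
    by (rule sum.reindex_bij_witness[of _ prod.swap prod.swap]) auto
  also have "\<dots> = (\<Sum>x\<in>X. of_nat (indeg A x) * g x)"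
    using sum_arcs_fst[OF X(1,3)] by (simp add: outdeg_converse)
  also have "\<dots> = (\<Sum>a\<in>A. g (fst a))"
    using sum_arcs_fst[OF X(1,2), of g] assms(2) unfolding balanced_def by simp
  finally show ?thesis by simp
qed

lemma balanced_potential_const:
  fixes g :: "'a \<Rightarrow> 'b::linordered_semidom"
  assumes "finite A" "balanced A" "\<And>u v. (u, v) \<in> A \<Longrightarrow> g v \<le> g u" "(u, v) \<in> A"
  shows "g u = g v"
proof (rule ccontr)
  assume "g u \<noteq> g v"
  with assms(3,4) have "g v < g u" by force
  hence "(\<Sum>a\<in>A. g (snd a)) < (\<Sum>a\<in>A. g (fst a))"
    using assms(1,3,4) by (intro sum_strict_mono_ex1 bexI[of _ "(u, v)"]) auto
  thus False using balanced_sum_fst_eq_sum_snd[OF assms(1,2), of g] by simp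
qed

section \<open>Distances in trees\<close>

definition adj_rel :: "'a set set \<Rightarrow> ('a \<times> 'a) set" where
  "adj_rel E = {(x, y). {x, y} \<in> E}"

definition graph_dist :: "'a set set \<Rightarrow> 'a \<Rightarrow> 'a \<Rightarrow> nat" where
  "graph_dist E r v = (LEAST k. (r, v) \<in> adj_rel E ^^ k)"

lemma graph_connected_adj_rel: "graph_connected V E \<longleftrightarrow> (\<forall>u\<in>V. \<forall>v\<in>V. (u, v) \<in> (adj_rel E)\<^sup>*)"
  unfolding graph_connected_def adj_rel_def ..

lemma sym_adj_rel: "sym (adj_rel E)"
  unfolding adj_rel_def sym_def by (simp add: insert_commute)

lemma simple_graph_edgeD: "simple_graph V E \<Longrightarrow> {u, v} \<in> E \<Longrightarrow> u \<in> V \<and> v \<in> V \<and> u \<noteq> v"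
  unfolding simple_graph_def by (metis doubleton_eq_iff)

lemma simple_graph_finite_edges: "simple_graph V E \<Longrightarrow> finite E"
  unfolding simple_graph_def by (rule finite_subset[of _ "Pow V"]) auto

lemma simple_graph_finite_nbrs:
  assumes "simple_graph V E"
  shows "finite (nbrs E v)"
proof -
  have "nbrs E v \<subseteq> V" using simple_graph_edgeD[OF assms] unfolding nbrs_def by blast
  thus ?thesis using assms unfolding simple_graph_def by (blast intro: finite_subset)
qed

lemma graph_dist_path:
  assumes "graph_connected V E" "r \<in> V" "v \<in> V"
  shows "(r, v) \<in> adj_rel E ^^ graph_dist E r v"
proof -
  have "(r, v) \<in> (adj_rel E)\<^sup>*" using assms unfolding graph_connected_adj_rel by simp
  then obtain k where "(r, v) \<in> adj_rel E ^^ k" using rtrancl_power by metis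
  thus ?thesis unfolding graph_dist_def by (rule LeastI)
qed

lemma graph_dist_edge_le:
  assumes "simple_graph V E" "graph_connected V E" "r \<in> V" "{u, v} \<in> E"
  shows "graph_dist E r v \<le> graph_dist E r u + 1"
proof -
  have "(r, u) \<in> adj_rel E ^^ graph_dist E r u"
    using graph_dist_path[OF assms(2,3)] simple_graph_edgeD[OF assms(1,4)] by simp
  moreover have "(u, v) \<in> adj_rel E" using assms(4) unfolding adj_rel_def by simp
  ultimately have "(r, v) \<in> adj_rel E ^^ Suc (graph_dist E r u)" by (rule relpow_Suc_I)
  thus ?thesis unfolding graph_dist_def by (simp add: Least_le)
qed

lemma graph_dist_eq_0_iff:
  assumes "graph_connected V E" "r \<in> V" "v \<in> V"
  shows "graph_dist E r v = 0 \<longleftrightarrow> v = r"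
  using graph_dist_path[OF assms] unfolding graph_dist_def
  by (auto intro: Least_equality)

lemma graph_dist_parent:
  assumes "simple_graph V E" "graph_connected V E" "r \<in> V" "v \<in> V" "v \<noteq> r"
  obtains u where "{u, v} \<in> E" "graph_dist E r u + 1 = graph_dist E r v"
proof -
  obtain k where k: "graph_dist E r v = Suc k"
    using graph_dist_eq_0_iff[OF assms(2-4)] assms(5) not0_implies_Suc by blast
  have "(r, v) \<in> adj_rel E ^^ Suc k" using graph_dist_path[OF assms(2-4)] k by simp
  then obtain u where ru: "(r, u) \<in> adj_rel E ^^ k" and uv: "(u, v) \<in> adj_rel E"
    by (rule relpow_Suc_E)
  have e: "{u, v} \<in> E" using uv unfolding adj_rel_def by simp
  have "graph_dist E r u \<le> k" using ru unfolding graph_dist_def by (rule Least_le)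
  with graph_dist_edge_le[OF assms(1-3) e] k have "graph_dist E r u + 1 = graph_dist E r v" by simp
  with e show thesis by (rule that)
qed

lemma graph_connected_by_descent:
  fixes f :: "'a \<Rightarrow> nat"
  assumes r: "r \<in> W"
    and desc: "\<And>x. x \<in> W \<Longrightarrow> x \<noteq> r \<Longrightarrow> \<exists>q\<in>W. {q, x} \<in> E \<and> f q < f x"
  shows "graph_connected W E"
proof -
  have reach: "(r, x) \<in> (adj_rel E)\<^sup>*" if "x \<in> W" for x
    using that
  proof (induction "f x" arbitrary: x rule: less_induct)
    case less
    show ?case
    proof (cases "x = r")
      case False
      then obtain q where "q \<in> W" "{q, x} \<in> E" "f q < f x" using desc less.prems by blast
      thus ?thesis using less.hyps unfolding adj_rel_def by (blast intro: rtrancl_into_rtrancl)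
    qed simp
  qed
  have "(u, v) \<in> (adj_rel E)\<^sup>*" if "u \<in> W" "v \<in> W" for u v
    using symD[OF sym_rtrancl[OF sym_adj_rel] reach[OF that(1)]] reach[OF that(2)]
    by (rule rtrancl_trans)
  thus ?thesis unfolding graph_connected_adj_rel by blast
qed

lemma ex_max_on_finite:
  fixes f :: "'a \<Rightarrow> nat"
  assumes "finite S" "x \<in> S"
  obtains y where "y \<in> S" "\<And>u. u \<in> S \<Longrightarrow> f u \<le> f y"
proof -
  have "Max (f ` S) \<in> f ` S" using assms by (intro Max_in) auto
  then obtain y where "y \<in> S" "f y = Max (f ` S)" by (metis imageE)
  thus thesis using that assms(1) by simp
qed

lemma graph_connected_Diff_farthest:
  assumes s: "simple_graph V E" and c: "graph_connected V E" and r: "r \<in> V"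
    and x: "x \<in> V" "x \<noteq> r" and xmax: "\<And>y. y \<in> V \<Longrightarrow> graph_dist E r y \<le> graph_dist E r x"
  shows "graph_connected (V - {x}) {e\<in>E. x \<notin> e}"
proof (rule graph_connected_by_descent[of r _ _ "graph_dist E r"])
  show "r \<in> V - {x}" using r x(2) by blast
next
  fix y assume y: "y \<in> V - {x}" "y \<noteq> r"
  obtain q where q: "{q, y} \<in> E" "graph_dist E r q + 1 = graph_dist E r y"
    using graph_dist_parent[OF s c r _ y(2)] y by blast
  have "q \<noteq> x" using q(2) xmax y by force
  thus "\<exists>q\<in>V - {x}. {q, y} \<in> {e\<in>E. x \<notin> e} \<and> graph_dist E r q < graph_dist E r y"
    using q y simple_graph_edgeD[OF s q(1)] by auto
qed

lemma connected_card_vertices_le: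
  "simple_graph V E \<Longrightarrow> graph_connected V E \<Longrightarrow> card V \<le> card E + 1"
proof (induction "card V" arbitrary: V E rule: less_induct)
  case less
  have finV: "finite V" using less.prems unfolding simple_graph_def by blast
  show ?case
  proof (cases "card V \<le> 1")
    case False
    then obtain r where r: "r \<in> V" by fastforce
    obtain x where x: "x \<in> V" and xmax: "\<And>y. y \<in> V \<Longrightarrow> graph_dist E r y \<le> graph_dist E r x"
      using ex_max_on_finite[OF finV r] by blast
    have "x \<noteq> r"
    proof
      assume "x = r"
      hence "y = r" if "y \<in> V" for y
        using xmax[OF that] graph_dist_eq_0_iff[OF less.prems(2) r] that r by (metis le_zero_eq)
      hence "card V \<le> 1" using card_le_Suc0_iff_eq[OF finV] by auto
      with False show False by simp
    qed
    let ?E' = "{e\<in>E. x \<notin> e}"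
    have "simple_graph (V - {x}) ?E'" using less.prems(1) finV unfolding simple_graph_def by fastforce
    moreover have "graph_connected (V - {x}) ?E'"
      by (rule graph_connected_Diff_farthest[OF less.prems r x \<open>x \<noteq> r\<close> xmax])
    moreover have "card (V - {x}) < card V" by (rule card_Diff1_less[OF finV x])
    ultimately have IH: "card (V - {x}) \<le> card ?E' + 1" using less.hyps by blast
    obtain q where "{q, x} \<in> E" using graph_dist_parent[OF less.prems r x \<open>x \<noteq> r\<close>] by blast
    hence "?E' \<subset> E" by blast
    hence "card ?E' < card E" using simple_graph_finite_edges[OF less.prems(1)] by (rule psubset_card_mono[rotated])
    moreover have "card V = card (V - {x}) + 1" using card_Suc_Diff1[OF finV x] by simp
    ultimately show ?thesis using IH by simp
  qed simp
qed

lemma tree_Diff_edge_not_connected: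
  assumes t: "is_tree V E" and e: "e \<in> E"
  shows "\<not> graph_connected V (E - {e})"
proof
  assume c: "graph_connected V (E - {e})"
  have s: "simple_graph V (E - {e})" using t unfolding is_tree_def simple_graph_def by blast
  have finE: "finite E" using t simple_graph_finite_edges unfolding is_tree_def by blast
  have "card V \<le> card (E - {e}) + 1" by (rule connected_card_vertices_le[OF s c])
  moreover have "card (E - {e}) + 1 = card E" using e finE card_Suc_Diff1 by fastforce
  moreover have "card E = card V - 1" "card V > 0"
    using t unfolding is_tree_def simple_graph_def by auto
  ultimately show False by linarith
qed

lemma tree_graph_dist_edge_neq:
  assumes t: "is_tree V E" and r: "r \<in> V" and e: "{u, v} \<in> E"
  shows "graph_dist E r u \<noteq> graph_dist E r v"
proof
  assume eq: "graph_dist E r u = graph_dist E r v"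
  have s: "simple_graph V E" and c: "graph_connected V E" using t unfolding is_tree_def by auto
  have "graph_connected V (E - {{u, v}})"
  proof (rule graph_connected_by_descent[OF r])
    fix x assume x: "x \<in> V" "x \<noteq> r"
    obtain q where q: "{q, x} \<in> E" "graph_dist E r q + 1 = graph_dist E r x"
      using graph_dist_parent[OF s c r x] by blast
    have "{q, x} \<noteq> {u, v}" using eq q(2) by (auto simp: doubleton_eq_iff)
    thus "\<exists>q\<in>V. {q, x} \<in> E - {{u, v}} \<and> graph_dist E r q < graph_dist E r x"
      using q simple_graph_edgeD[OF s q(1)] by auto
  qed
  thus False using tree_Diff_edge_not_connected[OF t e] by contradiction
qed

lemma tree_parent_unique:
  assumes t: "is_tree V E" and r: "r \<in> V" and e1: "{u1, v} \<in> E" and e2: "{u2, v} \<in> E"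
    and d1: "graph_dist E r u1 + 1 = graph_dist E r v" and d2: "graph_dist E r u2 + 1 = graph_dist E r v"
  shows "u1 = u2"
proof (rule ccontr)
  assume ne: "u1 \<noteq> u2"
  have s: "simple_graph V E" and c: "graph_connected V E" using t unfolding is_tree_def by auto
  have "graph_connected V (E - {{u1, v}})"
  proof (rule graph_connected_by_descent[OF r])
    fix x assume x: "x \<in> V" "x \<noteq> r"
    show "\<exists>q\<in>V. {q, x} \<in> E - {{u1, v}} \<and> graph_dist E r q < graph_dist E r x"
    proof (cases "x = v")
      case True
      thus ?thesis using e2 d2 ne simple_graph_edgeD[OF s e2] by (auto simp: doubleton_eq_iff)
    next
      case False
      obtain q where q: "{q, x} \<in> E" "graph_dist E r q + 1 = graph_dist E r x"
        using graph_dist_parent[OF s c r x] by blast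
      have "{q, x} \<noteq> {u1, v}" using False d1 q(2) by (auto simp: doubleton_eq_iff)
      thus ?thesis using q simple_graph_edgeD[OF s q(1)] by auto
    qed
  qed
  thus False using tree_Diff_edge_not_connected[OF t e1] by contradiction
qed

lemma tree_card_parents_le_1:
  assumes t: "is_tree V E" and r: "r \<in> V"
  shows "card {x. {v, x} \<in> E \<and> graph_dist E r x < graph_dist E r v} \<le> 1"
proof -
  have s: "simple_graph V E" and c: "graph_connected V E" using t unfolding is_tree_def by auto
  let ?P = "{x. {v, x} \<in> E \<and> graph_dist E r x < graph_dist E r v}"
  have parent: "{x, v} \<in> E \<and> graph_dist E r x + 1 = graph_dist E r v" if "x \<in> ?P" for x
    using that graph_dist_edge_le[OF s c r, of x v] by (simp add: insert_commute)
  have fin: "finite ?P"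
    using simple_graph_finite_nbrs[OF s, of v] by (rule finite_subset[rotated]) (auto simp: nbrs_def insert_commute)
  have "\<forall>x\<in>?P. \<forall>y\<in>?P. x = y"
  proof (intro ballI)
    fix x y assume "x \<in> ?P" "y \<in> ?P"
    from parent[OF this(1)] parent[OF this(2)] show "x = y"
      using tree_parent_unique[OF t r, of x v y] by blast
  qed
  thus ?thesis using card_le_Suc0_iff_eq[OF fin] by simp
qed

section \<open>Orientations and the Alon--Tarsi number\<close>

lemma orientation_subset:
  assumes "orientation V E D" "simple_graph V E"
  shows "D \<subseteq> V \<times> V"
  using assms simple_graph_edgeD unfolding orientation_def by fast

lemma orientation_card_arcs:
  assumes o: "orientation V E D" and s: "simple_graph V E"
  shows "card D = card E"
proof -
  let ?edge = "\<lambda>(u, v). {u, v}"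
  have arc_edge: "{u, v} \<in> E" if "(u, v) \<in> D" for u v
    using o that unfolding orientation_def by blast
  have one_dir: "(u, v) \<in> D \<longleftrightarrow> (v, u) \<notin> D" if "{u, v} \<in> E" for u v
    using o that unfolding orientation_def by blast
  have "inj_on ?edge D"
  proof (rule inj_onI, clarify)
    fix x y x' y' assume "(x, y) \<in> D" "(x', y') \<in> D" "{x, y} = {x', y'}"
    thus "x = x' \<and> y = y'" using one_dir arc_edge by (auto simp: doubleton_eq_iff)
  qed
  moreover have "?edge ` D = E"
  proof (intro equalityI subsetI)
    fix e assume "e \<in> E"
    moreover obtain u v where "e = {u, v}" using s \<open>e \<in> E\<close> unfolding simple_graph_def by blast
    ultimately show "e \<in> ?edge ` D"
      using one_dir[of u v] by (cases "(u, v) \<in> D") (force simp: insert_commute)+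
  qed (use arc_edge in auto)
  ultimately show ?thesis using card_image by fastforce
qed

lemma card_eq_sum_outdeg:
  assumes "finite V" "D \<subseteq> V \<times> V"
  shows "card D = (\<Sum>v\<in>V. outdeg D v)"
proof -
  have "D = Sigma V (\<lambda>v. {x. (v, x) \<in> D})" using assms(2) by auto
  moreover have "finite {x. (v, x) \<in> D}" for v
    using assms by (intro finite_out_nbrs finite_subset[OF assms(2)]) auto
  ultimately show ?thesis unfolding outdeg_def using card_SigmaI[OF assms(1)] by metis
qed

lemma orientation_card_edges_le:
  assumes o: "orientation V E D" and s: "simple_graph V E" and k: "\<forall>v\<in>V. outdeg D v \<le> k"
  shows "card E \<le> k * card V"
proof -
  have "card E = (\<Sum>v\<in>V. outdeg D v)"
    using orientation_card_arcs[OF o s] card_eq_sum_outdeg orientation_subset[OF o s] s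
    unfolding simple_graph_def by metis
  also have "\<dots> \<le> (\<Sum>v\<in>V. k)" using k by (intro sum_mono) blast
  finally show ?thesis by (simp add: mult.commute)
qed

lemma num_even_eulerian_neq_odd:
  assumes "finite D" and "odd (card {A. eulerian_sub D A})"
  shows "num_even_eulerian D \<noteq> num_odd_eulerian D"
proof -
  let ?E = "{A. eulerian_sub D A \<and> even (card A)}" and ?O = "{A. eulerian_sub D A \<and> odd (card A)}"
  have fin: "finite {A. eulerian_sub D A}"
    using assms(1) unfolding eulerian_sub_def by (blast intro: finite_subset[of _ "Pow D"])
  have "{A. eulerian_sub D A} = ?E \<union> ?O" by blast
  also have "card (?E \<union> ?O) = card ?E + card ?O"
    using fin by (intro card_Un_disjoint) (auto intro: finite_subset[OF _ fin])
  finally have "card {A. eulerian_sub D A} = card ?E + card ?O" .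
  thus ?thesis using assms(2) unfolding num_even_eulerian_def num_odd_eulerian_def by auto
qed

lemma AT_eqI:
  assumes "orientation V E D" "\<forall>v\<in>V. outdeg D v + 1 \<le> k"
    and "num_even_eulerian D \<noteq> num_odd_eulerian D"
    and lower: "\<And>D'. orientation V E D' \<Longrightarrow> \<exists>v\<in>V. k \<le> outdeg D' v + 1"
  shows "AT V E = k"
  unfolding AT_def
proof (rule Least_equality)
  fix m assume "\<exists>D'. orientation V E D' \<and> (\<forall>v\<in>V. outdeg D' v + 1 \<le> m) \<and>
    num_even_eulerian D' \<noteq> num_odd_eulerian D'"
  thus "k \<le> m" using lower by force
qed (use assms(1-3) in blast)

section \<open>The outer cycle and the hub digraph\<close>

lemma Suc_mod_eq_iff:
  fixes i i' k :: nat
  assumes "i < k" "i' < k"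
  shows "Suc i' mod k = i \<longleftrightarrow> i' = (i + k - 1) mod k"
  using assms by (cases "Suc i' = k"; cases i) (auto simp: mod_Suc)

definition cyclic_arcs :: "(nat \<Rightarrow> 'a) \<Rightarrow> nat \<Rightarrow> ('a \<times> 'a) set" where
  "cyclic_arcs f k = {(f i, f (Suc i mod k)) | i. i < k}"

lemma balanced_cyclic_arcs:
  assumes inj: "inj_on f {..<k}"
  shows "balanced (cyclic_arcs f k)"
  unfolding balanced_def
proof
  fix v
  show "indeg (cyclic_arcs f k) v = outdeg (cyclic_arcs f k) v"
  proof (cases "v \<in> f ` {..<k}")
    case True
    then obtain i where i: "i < k" "v = f i" by blast
    have f_eq: "f i' = f i \<longleftrightarrow> i' = i" if "i' < k" for i'
      using inj_on_eq_iff[OF inj] that i(1) by simp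
    have "(x, v) \<in> cyclic_arcs f k \<longleftrightarrow> x = f ((i + k - 1) mod k)" for x
    proof -
      have "f (Suc i' mod k) = f i \<longleftrightarrow> Suc i' mod k = i" for i'
        using f_eq i(1) by simp
      have "(x, v) \<in> cyclic_arcs f k \<longleftrightarrow> (\<exists>i'<k. x = f i' \<and> f (Suc i' mod k) = f i)"
        unfolding cyclic_arcs_def i(2) by auto
      also have "\<dots> \<longleftrightarrow> (\<exists>i'<k. x = f i' \<and> Suc i' mod k = i)"
        using \<open>\<And>i'. f (Suc i' mod k) = f i \<longleftrightarrow> Suc i' mod k = i\<close> by simp
      also have "\<dots> \<longleftrightarrow> x = f ((i + k - 1) mod k)"
        using Suc_mod_eq_iff[OF i(1)] i(1) by (metis mod_less_divisor zero_less_iff_neq_zero not_less0)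
      finally show ?thesis .
    qed
    moreover have "{y. (v, y) \<in> cyclic_arcs f k} = {f (Suc i mod k)}"
      using i(1) f_eq unfolding cyclic_arcs_def i(2) by (auto dest: sym)
    ultimately show ?thesis unfolding indeg_def outdeg_def by simp
  next
    case False
    hence "{x. (x, v) \<in> cyclic_arcs f k} = {}" "{y. (v, y) \<in> cyclic_arcs f k} = {}"
      unfolding cyclic_arcs_def by auto
    thus ?thesis unfolding indeg_def outdeg_def by simp
  qed
qed

text \<open>The two orientations of the outer cycle c 0, ..., c (n-1): the directed cycle, or the
  acyclic one in which the arc between c (n-1) and c 0 is reversed, so that all arcs go from
  smaller to larger indices.\<close>
definition outer_step :: "bool \<Rightarrow> nat \<Rightarrow> nat \<Rightarrow> nat \<Rightarrow> bool" where
  "outer_step cyclic n i j \<longleftrightarrow>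
     (if cyclic then j = Suc i mod n else (Suc i < n \<and> j = Suc i) \<or> (i = 0 \<and> j = n - 1))"

definition outer_arcs :: "bool \<Rightarrow> (nat \<Rightarrow> 'a) \<Rightarrow> nat \<Rightarrow> ('a \<times> 'a) set" where
  "outer_arcs cyclic c n = {(c i, c j) | i j. i < n \<and> j < n \<and> outer_step cyclic n i j}"

lemma outer_arcs_cyclic: "0 < n \<Longrightarrow> outer_arcs True c n = cyclic_arcs c n"
  unfolding outer_arcs_def cyclic_arcs_def outer_step_def by auto

lemma outer_step_acyclic_less: "outer_step False n i j \<Longrightarrow> 3 \<le> n \<Longrightarrow> i < j"
  unfolding outer_step_def by auto

lemma outer_step_out_card:
  "card {j. j < n \<and> outer_step cyclic n i j} \<le> (if cyclic \<or> i \<noteq> 0 then 1 else 2)"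
proof -
  let ?S = "if cyclic then {Suc i mod n} else if i = 0 then {1, n - 1} else {Suc i}"
  have "card {j. j < n \<and> outer_step cyclic n i j} \<le> card ?S"
    by (rule card_mono) (auto simp: outer_step_def)
  also have "card ?S \<le> (if cyclic \<or> i \<noteq> 0 then 1 else 2)"
    by (auto simp: card_insert_if)
  finally show ?thesis .
qed

lemma outer_step_unique_dir:
  assumes "i < n" "3 \<le> n"
  shows "outer_step cyclic n i (Suc i mod n) \<longleftrightarrow> \<not> outer_step cyclic n (Suc i mod n) i"
  using assms unfolding outer_step_def
  by (cases "Suc i < n"; cases "Suc (Suc i) < n") (auto simp: mod_Suc)

locale outer_cycle =
  fixes c :: "nat \<Rightarrow> 'a" and n :: nat
  assumes inj: "inj_on c {..<n}" and n3: "3 \<le> n"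
begin

lemma c_eq_iff: "i < n \<Longrightarrow> j < n \<Longrightarrow> c i = c j \<longleftrightarrow> i = j"
  using inj_on_eq_iff[OF inj] by simp

lemma outer_arcs_iff: "i < n \<Longrightarrow> j < n \<Longrightarrow> (c i, c j) \<in> outer_arcs cyclic c n \<longleftrightarrow> outer_step cyclic n i j"
  unfolding outer_arcs_def using c_eq_iff by blast

lemma outer_arc_0_1: "(c 0, c 1) \<in> outer_arcs cyclic c n"
  using outer_arcs_iff[of 0 1] n3 unfolding outer_step_def by simp

lemma outer_arcsE:
  assumes "(x, y) \<in> outer_arcs cyclic c n"
  obtains i j where "i < n" "j < n" "outer_step cyclic n i j" "x = c i" "y = c j"
  using assms unfolding outer_arcs_def by blast

lemma finite_outer_arcs: "finite (outer_arcs cyclic c n)"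
  by (rule finite_subset[of _ "c ` {..<n} \<times> c ` {..<n}"]) (auto elim: outer_arcsE)

lemma card_out_outer_arcs:
  assumes "i < n"
  shows "card {y. (c i, y) \<in> outer_arcs cyclic c n} \<le> (if cyclic \<or> i \<noteq> 0 then 1 else 2)"
proof -
  have "{y. (c i, y) \<in> outer_arcs cyclic c n} = c ` {j. j < n \<and> outer_step cyclic n i j}"
    using assms by (auto elim!: outer_arcsE simp: c_eq_iff outer_arcs_iff)
  hence "card {y. (c i, y) \<in> outer_arcs cyclic c n} \<le> card {j. j < n \<and> outer_step cyclic n i j}"
    by (simp add: card_image_le)
  thus ?thesis using outer_step_out_card[of n cyclic i] by linarith
qed

lemma outer_arc_cycle_edge:
  assumes "(x, y) \<in> outer_arcs cyclic c n"
  shows "{x, y} \<in> cycle_edges c n"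
proof -
  obtain i j where ij: "i < n" "j < n" "outer_step cyclic n i j" "x = c i" "y = c j"
    using assms by (rule outer_arcsE)
  show ?thesis
  proof (cases "j = Suc i mod n")
    case True
    thus ?thesis unfolding cycle_edges_def using ij by blast
  next
    case False
    hence "i = 0" "j = n - 1" "Suc (n - 1) mod n = 0" using ij n3 unfolding outer_step_def by (auto split: if_splits)
    hence "{x, y} = {c (n - 1), c (Suc (n - 1) mod n)}" using ij by (simp add: insert_commute)
    thus ?thesis unfolding cycle_edges_def using n3 by force
  qed
qed

lemma outer_arcs_orient:
  assumes "{x, y} \<in> cycle_edges c n"
  shows "(x, y) \<in> outer_arcs cyclic c n \<longleftrightarrow> (y, x) \<notin> outer_arcs cyclic c n"
proof -
  obtain i where i: "i < n" "{x, y} = {c i, c (Suc i mod n)}"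
    using assms unfolding cycle_edges_def by blast
  have "Suc i mod n < n" using n3 by simp
  hence "(c i, c (Suc i mod n)) \<in> outer_arcs cyclic c n \<longleftrightarrow> (c (Suc i mod n), c i) \<notin> outer_arcs cyclic c n"
    using outer_arcs_iff i(1) outer_step_unique_dir[OF i(1) n3] by blast
  thus ?thesis using i(2) by (auto simp: doubleton_eq_iff)
qed

lemma card_cycle_edges: "card (cycle_edges c n) = n"
proof -
  let ?edge = "\<lambda>i. {c i, c (Suc i mod n)}"
  have "inj_on ?edge {..<n}"
  proof (rule inj_onI)
    fix i j assume ij: "i \<in> {..<n}" "j \<in> {..<n}" "?edge i = ?edge j"
    have "Suc i mod n < n" "Suc j mod n < n" using n3 by simp_all
    hence "i = j \<or> (i = Suc j mod n \<and> Suc i mod n = j)"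
      using ij c_eq_iff by (auto simp: doubleton_eq_iff)
    thus "i = j" using ij n3 by (auto simp: mod_Suc split: if_splits)
  qed
  moreover have "cycle_edges c n = ?edge ` {..<n}" unfolding cycle_edges_def by blast
  ultimately show ?thesis by (simp add: card_image)
qed

lemma balanced_outer_arcs_cyclic: "balanced (outer_arcs True c n)"
  using n3 by (simp add: outer_arcs_cyclic balanced_cyclic_arcs[OF inj])

lemma balanced_subset_acyclic_outer_arcs:
  assumes sub: "A \<subseteq> outer_arcs False c n" and bal: "balanced A"
  shows "A = {}"
proof (rule ccontr)
  assume "A \<noteq> {}"
  then obtain i j where a: "(c i, c j) \<in> A" "i < n" "j < n" "outer_step False n i j"
    using sub by (fastforce elim: outer_arcsE)
  have finA: "finite A" using sub finite_outer_arcs finite_subset by blast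
  define g where "g v = n - inv_into {..<n} c v" for v
  have g: "g (c k) = n - k" if "k < n" for k
    unfolding g_def using inj that by (simp add: inv_into_f_f)
  have "g v \<le> g u" if "(u, v) \<in> A" for u v
    using that sub n3 g by (force elim!: outer_arcsE dest: outer_step_acyclic_less)
  hence "g (c i) = g (c j)" using balanced_potential_const[OF finA bal _ a(1)] by blast
  moreover have "i < j" using outer_step_acyclic_less[OF a(4) n3] .
  ultimately show False using g a(2,3) by simp
qed

lemma balanced_subset_cyclic_outer_arcs:
  assumes sub: "A \<subseteq> outer_arcs True c n" and bal: "balanced A" and "A \<noteq> {}"
  shows "A = outer_arcs True c n"
proof -
  obtain i j where a: "(c i, c j) \<in> A" "i < n" "j < n" "outer_step True n i j"
    using sub \<open>A \<noteq> {}\<close> by (fastforce elim: outer_arcsE)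
  have finA: "finite A" using sub finite_outer_arcs finite_subset by blast
  have step: "(c ((i + k) mod n), c (Suc ((i + k) mod n) mod n)) \<in> A" for k
  proof (induction k)
    case 0
    thus ?case using a unfolding outer_step_def by simp
  next
    case (Suc k)
    let ?b = "Suc ((i + k) mod n) mod n"
    obtain y where y: "(c ?b, y) \<in> A" using balanced_out_arc[OF finA bal Suc.IH] by blast
    then obtain i' j' where "i' < n" "j' < n" "outer_step True n i' j'" "c ?b = c i'" "y = c j'"
      using sub by (blast elim: outer_arcsE)
    moreover have "?b < n" using n3 by simp
    ultimately have "y = c (Suc ?b mod n)" using c_eq_iff unfolding outer_step_def by simp
    thus ?case using y by (simp add: mod_Suc_eq)
  qed
  have "outer_arcs True c n \<subseteq> A"
  proof
    fix b assume "b \<in> outer_arcs True c n"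
    then obtain i' where "i' < n" "b = (c i', c (Suc i' mod n))"
      unfolding outer_arcs_def outer_step_def by auto
    moreover have "(i + (i' + n - i)) mod n = i'" using a(2) \<open>i' < n\<close> by simp
    ultimately show "b \<in> A" using step[of "i' + n - i"] by simp
  qed
  thus ?thesis using sub by blast
qed

lemma balanced_subset_outer_arcs:
  assumes "A \<subseteq> outer_arcs cyclic c n" "balanced A"
  shows "A = {} \<or> (cyclic \<and> A = outer_arcs True c n)"
  using assms balanced_subset_acyclic_outer_arcs balanced_subset_cyclic_outer_arcs
  by (cases cyclic) auto

end

definition hub_arcs :: "bool \<Rightarrow> (nat \<Rightarrow> 'a) \<Rightarrow> nat \<Rightarrow> 'a \<Rightarrow> nat set \<Rightarrow> ('a \<times> 'a) set" where
  "hub_arcs cyclic c n w J = outer_arcs cyclic c n \<union> (\<lambda>j. (c j, w)) ` J \<union> {(w, c 0)}"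

definition hub_cycle :: "(nat \<Rightarrow> 'a) \<Rightarrow> 'a \<Rightarrow> nat \<Rightarrow> ('a \<times> 'a) set" where
  "hub_cycle c w j = cyclic_arcs (c(Suc j := w)) (Suc (Suc j))"

lemma hub_cycle_eq: "hub_cycle c w j = {(c i, c (Suc i)) | i. i < j} \<union> {(c j, w), (w, c 0)}"
proof -
  have "(\<exists>i<Suc (Suc j). a = ((c(Suc j := w)) i, (c(Suc j := w)) (Suc i mod Suc (Suc j)))) \<longleftrightarrow>
        (\<exists>i<j. a = (c i, c (Suc i))) \<or> a = (c j, w) \<or> a = (w, c 0)" for a
  proof
    assume "\<exists>i<Suc (Suc j). a = ((c(Suc j := w)) i, (c(Suc j := w)) (Suc i mod Suc (Suc j)))"
    then obtain i where "i < Suc (Suc j)" "a = ((c(Suc j := w)) i, (c(Suc j := w)) (Suc i mod Suc (Suc j)))"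
      by blast
    moreover from this(1) consider "i < j" | "i = j" | "i = Suc j" by linarith
    ultimately show "(\<exists>i<j. a = (c i, c (Suc i))) \<or> a = (c j, w) \<or> a = (w, c 0)"
      by cases auto
  next
    assume "(\<exists>i<j. a = (c i, c (Suc i))) \<or> a = (c j, w) \<or> a = (w, c 0)"
    then consider i where "i < j" "a = (c i, c (Suc i))" | "a = (c j, w)" | "a = (w, c 0)"
      by blast
    thus "\<exists>i<Suc (Suc j). a = ((c(Suc j := w)) i, (c(Suc j := w)) (Suc i mod Suc (Suc j)))"
    proof cases
      case (1 i)
      thus ?thesis by (intro exI[of _ i]) auto
    next
      case 2
      thus ?thesis by (intro exI[of _ j]) auto
    next
      case 3
      thus ?thesis by (intro exI[of _ "Suc j"]) auto
    qed
  qed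
  thus ?thesis unfolding hub_cycle_def cyclic_arcs_def by blast
qed

locale hub_setting = outer_cycle c n for c :: "nat \<Rightarrow> 'a" and n +
  fixes w :: 'a and J :: "nat set"
  assumes w_notin: "w \<notin> c ` {..<n}"
    and J_bounds: "j \<in> J \<Longrightarrow> 0 < j \<and> j < n - 1"
begin

lemma c_neq_w: "i < n \<Longrightarrow> c i \<noteq> w" "i < n \<Longrightarrow> w \<noteq> c i"
  using w_notin by blast+

lemma J_less: "j \<in> J \<Longrightarrow> j < n"
  using J_bounds by fastforce

lemma finite_J: "finite J"
  using J_less by (blast intro: finite_subset[of J "{..<n}"])

lemma finite_hub_arcs: "finite (hub_arcs cyclic c n w J)"
  unfolding hub_arcs_def using finite_outer_arcs finite_J by simp

lemma hub_arc_from_w: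
  assumes "(w, x) \<in> hub_arcs cyclic c n w J"
  shows "x = c 0"
proof -
  have "(w, x) \<notin> outer_arcs cyclic c n" using c_neq_w(2) by (blast elim: outer_arcsE)
  moreover have "(w, x) \<notin> (\<lambda>j. (c j, w)) ` J" using c_neq_w(2) J_less by blast
  ultimately show ?thesis using assms unfolding hub_arcs_def by blast
qed

lemma hub_arc_to_w:
  assumes "(x, w) \<in> hub_arcs cyclic c n w J"
  shows "\<exists>j\<in>J. x = c j"
proof -
  have "(x, w) \<notin> outer_arcs cyclic c n" using c_neq_w(2) by (blast elim: outer_arcsE)
  moreover have "(x, w) \<noteq> (w, c 0)" using c_neq_w(2)[of 0] n3 by auto
  ultimately show ?thesis using assms unfolding hub_arcs_def by blast
qed

lemma hub_arc_to_c:
  assumes "(x, c i) \<in> hub_arcs cyclic c n w J" "0 < i" "i < n - 1"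
  shows "x = c (i - 1)"
proof -
  have "i < n" using assms(3) by simp
  hence "(x, c i) \<notin> (\<lambda>j. (c j, w)) ` J" using c_neq_w(1)[of i] by auto
  moreover have "(x, c i) \<noteq> (w, c 0)" using c_eq_iff[of i 0] assms(2,3) by auto
  ultimately have "(x, c i) \<in> outer_arcs cyclic c n" using assms(1) unfolding hub_arcs_def by blast
  then obtain i' j where i'j: "i' < n" "j < n" "outer_step cyclic n i' j" "x = c i'" "c i = c j"
    by (rule outer_arcsE)
  have "j = i" using i'j \<open>i < n\<close> c_eq_iff by simp
  hence "i' = i - 1"
    using i'j(1,3) assms(2,3) unfolding outer_step_def by (cases "Suc i' = n") (auto split: if_splits)
  thus ?thesis using i'j(4) by simp
qed

lemma inj_hub_cycle_vertices:
  assumes "j < n"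
  shows "inj_on (c(Suc j := w)) {..<Suc (Suc j)}"
proof (rule inj_onI)
  fix a b assume ab: "a \<in> {..<Suc (Suc j)}" "b \<in> {..<Suc (Suc j)}" "(c(Suc j := w)) a = (c(Suc j := w)) b"
  have "a < n" if "a \<noteq> Suc j" "a \<in> {..<Suc (Suc j)}" for a using that assms by auto
  thus "a = b" using ab c_eq_iff c_neq_w by (cases "a = Suc j"; cases "b = Suc j") auto
qed

lemma balanced_hub_cycle: "j < n \<Longrightarrow> balanced (hub_cycle c w j)"
  unfolding hub_cycle_def by (rule balanced_cyclic_arcs[OF inj_hub_cycle_vertices])

lemma hub_cycle_subset: "j \<in> J \<Longrightarrow> hub_cycle c w j \<subseteq> hub_arcs cyclic c n w J"
proof -
  assume j: "j \<in> J"
  have "(c i, c (Suc i)) \<in> outer_arcs cyclic c n" if "i < j" for i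
    using that J_bounds[OF j] outer_arcs_iff[of i "Suc i"] unfolding outer_step_def by auto
  thus ?thesis using j unfolding hub_cycle_eq hub_arcs_def by blast
qed

lemma balanced_hub_subset_avoiding_w:
  assumes sub: "A \<subseteq> hub_arcs cyclic c n w J" and bal: "balanced A" and nw: "(w, c 0) \<notin> A"
  shows "A = {} \<or> (cyclic \<and> A = outer_arcs True c n)"
proof -
  have finA: "finite A" using sub finite_hub_arcs finite_subset by blast
  have no_out: "(w, y) \<notin> A" for y using sub nw hub_arc_from_w by blast
  have "(x, w) \<notin> A" for x using balanced_out_arc[OF finA bal] no_out by blast
  hence "A \<subseteq> outer_arcs cyclic c n" using sub nw unfolding hub_arcs_def by blast
  thus ?thesis using balanced_subset_outer_arcs bal by blast
qed

lemma balanced_hub_subset_through_w: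
  assumes sub: "A \<subseteq> hub_arcs cyclic c n w J" and bal: "balanced A" and wA: "(w, c 0) \<in> A"
  shows "\<exists>j\<in>J. A = hub_cycle c w j"
proof -
  have finA: "finite A" using sub finite_hub_arcs finite_subset by blast
  obtain x where "(x, w) \<in> A" using balanced_in_arc[OF finA bal wA] by blast
  then obtain j where j: "j \<in> J" "(c j, w) \<in> A" using sub hub_arc_to_w by blast
  have jn: "0 < j" "j < n - 1" using J_bounds[OF j(1)] by auto
  have pred_arcs: "(c (j - Suc d), c (j - d)) \<in> A" if "d < j" for d
    using that
  proof (induction d)
    case 0
    obtain x where "(x, c j) \<in> A" using balanced_in_arc[OF finA bal j(2)] by blast
    thus ?case using hub_arc_to_c[of x j] sub jn by auto
  next
    case (Suc d)
    obtain x where "(x, c (j - Suc d)) \<in> A" using balanced_in_arc[OF finA bal] Suc by fastforce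
    moreover have "j - Suc d - 1 = j - Suc (Suc d)" by simp
    ultimately show ?case using hub_arc_to_c[of x "j - Suc d"] sub jn Suc.prems by auto
  qed
  have cyc_sub: "hub_cycle c w j \<subseteq> A"
  proof -
    have "(c i, c (Suc i)) \<in> A" if "i < j" for i
      using pred_arcs[of "j - Suc i"] that by (simp add: Suc_diff_Suc)
    thus ?thesis unfolding hub_cycle_eq using j(2) wA by blast
  qed
  have "balanced (A - hub_cycle c w j)"
    using balanced_Diff[OF finA cyc_sub bal balanced_hub_cycle] jn by simp
  moreover have "(w, c 0) \<notin> A - hub_cycle c w j" "(c 0, c 1) \<notin> A - hub_cycle c w j"
    unfolding hub_cycle_eq using jn by auto
  ultimately have "A - hub_cycle c w j = {}"
    using balanced_hub_subset_avoiding_w[of "A - hub_cycle c w j"] sub outer_arc_0_1 by blast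
  thus ?thesis using cyc_sub j(1) by blast
qed

lemma balanced_hub_subsets:
  "{A. A \<subseteq> hub_arcs cyclic c n w J \<and> balanced A} =
     insert {} (hub_cycle c w ` J \<union> (if cyclic then {outer_arcs True c n} else {}))"
    (is "?L = ?R")
proof (intro equalityI subsetI)
  fix A assume "A \<in> ?L"
  hence sub: "A \<subseteq> hub_arcs cyclic c n w J" and bal: "balanced A" by auto
  show "A \<in> ?R"
  proof (cases "(w, c 0) \<in> A")
    case True
    thus ?thesis using balanced_hub_subset_through_w[OF sub bal] by blast
  next
    case False
    thus ?thesis using balanced_hub_subset_avoiding_w[OF sub bal] by auto
  qed
next
  fix A assume "A \<in> ?R"
  then consider "A = {}" | j where "j \<in> J" "A = hub_cycle c w j" | "cyclic" "A = outer_arcs True c n"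
    by (auto split: if_splits)
  thus "A \<in> ?L"
  proof cases
    case 1
    thus ?thesis using balanced_empty by simp
  next
    case (2 j)
    thus ?thesis using hub_cycle_subset balanced_hub_cycle J_less by simp
  next
    case 3
    thus ?thesis using balanced_outer_arcs_cyclic unfolding hub_arcs_def by auto
  qed
qed

lemma card_balanced_hub_subsets:
  "card {A. A \<subseteq> hub_arcs cyclic c n w J \<and> balanced A} = card J + (if cyclic then 2 else 1)"
proof -
  have "inj_on (hub_cycle c w) J"
  proof (rule inj_onI)
    fix j j' assume j: "j \<in> J" "j' \<in> J" "hub_cycle c w j = hub_cycle c w j'"
    have bounds: "j < n" "j' < n" using J_bounds j(1,2) by fastforce+
    have "(c j, w) \<in> hub_cycle c w j'" using j(3) unfolding hub_cycle_eq by blast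
    then consider i where "i < j'" "w = c (Suc i)" | "j = j'" | "w = c 0"
      using c_eq_iff[of j j'] bounds unfolding hub_cycle_eq by auto
    thus "j = j'"
    proof cases
      case (1 i)
      thus ?thesis using c_neq_w(2)[of "Suc i"] bounds by simp
    next
      case 3
      thus ?thesis using c_neq_w(2)[of 0] n3 by simp
    qed
  qed
  hence "card (hub_cycle c w ` J) = card J" by (rule card_image)
  moreover have "(w, c 0) \<notin> outer_arcs True c n" using c_neq_w(2) by (blast elim: outer_arcsE)
  hence "{} \<notin> hub_cycle c w ` J" "outer_arcs True c n \<notin> hub_cycle c w ` J"
    unfolding hub_cycle_eq by blast+
  moreover have "outer_arcs True c n \<noteq> {}" using outer_arc_0_1 by blast
  ultimately show ?thesis unfolding balanced_hub_subsets using finite_J by simp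
qed

end

section \<open>The orientation of a Halin graph\<close>

lemma leaf_nbrs_eq:
  assumes "b \<in> leaves V E" "u \<in> nbrs E b" "u' \<in> nbrs E b"
  shows "u = u'"
proof -
  have "card (nbrs E b) = 1" using assms(1) unfolding leaves_def deg_def by simp
  then obtain z where "nbrs E b = {z}" using card_1_singletonE by blast
  thus ?thesis using assms(2,3) by simp
qed

lemma adjacent_leaves_span:
  assumes c: "graph_connected V E" and b: "b \<in> leaves V E" "b' \<in> leaves V E"
    and e: "{b, b'} \<in> E" and v: "v \<in> V"
  shows "v \<in> {b, b'}"
proof -
  have "(b, v) \<in> (adj_rel E)\<^sup>*" using c v b(1) unfolding graph_connected_adj_rel leaves_def by simp
  thus ?thesis
  proof (induction rule: rtrancl_induct)
    case (step y z)
    have "z \<in> nbrs E y" using step.hyps(2) unfolding adj_rel_def nbrs_def by (simp add: insert_commute)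
    moreover have "b' \<in> nbrs E b" "b \<in> nbrs E b'" using e unfolding nbrs_def by (simp_all add: insert_commute)
    ultimately show ?case using step.IH leaf_nbrs_eq[OF b(1)] leaf_nbrs_eq[OF b(2)] by blast
  qed simp
qed

lemma farthest_inner_vertex_leaf_nbrs:
  assumes t: "is_tree V E" and nd2: "\<forall>v\<in>V. deg E v \<noteq> 2"
    and x0: "x0 \<in> V" and y: "y \<in> V" "y \<notin> leaves V E" "y \<noteq> x0"
    and ymax: "\<And>u. u \<in> V \<Longrightarrow> u \<notin> leaves V E \<Longrightarrow> graph_dist E x0 u \<le> graph_dist E x0 y"
  shows "2 \<le> card {b \<in> leaves V E. {b, y} \<in> E}"
proof -
  have s: "simple_graph V E" and cn: "graph_connected V E" using t unfolding is_tree_def by auto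
  let ?N = "nbrs E y" and ?d = "graph_dist E x0"
  have finN: "finite ?N" by (rule simple_graph_finite_nbrs[OF s])
  obtain u where "{u, y} \<in> E" using graph_dist_parent[OF s cn x0 y(1) y(3)] by blast
  hence "card ?N \<noteq> 0" using finN unfolding nbrs_def by auto
  moreover have "card ?N \<noteq> 1" "card ?N \<noteq> 2" using y nd2 unfolding leaves_def deg_def by auto
  ultimately have "card ?N \<ge> 3" by linarith
  let ?P = "{x. {y, x} \<in> E \<and> ?d x < ?d y}"
  have "?N - leaves V E \<subseteq> ?P"
  proof
    fix x assume x: "x \<in> ?N - leaves V E"
    hence e: "{x, y} \<in> E" unfolding nbrs_def by simp
    have "?d x \<le> ?d y" using ymax x simple_graph_edgeD[OF s e] by blast
    moreover have "?d x \<noteq> ?d y" by (rule tree_graph_dist_edge_neq[OF t x0 e])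
    ultimately show "x \<in> ?P" using e by (simp add: insert_commute)
  qed
  moreover have "?P \<subseteq> ?N" unfolding nbrs_def by (auto simp: insert_commute)
  hence "finite ?P" using finN by (rule finite_subset)
  ultimately have "card (?N - leaves V E) \<le> card ?P" by (rule card_mono[rotated])
  hence "card (?N - leaves V E) \<le> 1" using tree_card_parents_le_1[OF t x0, of y] by linarith
  moreover have "card ?N \<le> card (?N \<inter> leaves V E) + card (?N - leaves V E)"
    by (metis Int_Diff_Un card_Un_le)
  moreover have "?N \<inter> leaves V E = {b \<in> leaves V E. {b, y} \<in> E}" unfolding nbrs_def by blast
  ultimately show ?thesis using \<open>card ?N \<ge> 3\<close> by simp
qed

locale halin_config =
  fixes V :: "'a set" and ET :: "'a set set" and c :: "nat \<Rightarrow> 'a" and n :: nat and r w :: 'a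
  assumes tree: "is_tree V ET"
    and leaf_enum: "bij_betw c {..<n} (leaves V ET)"
    and n3: "3 \<le> n"
    and r_inner: "r \<in> V" "r \<notin> leaves V ET"
    and w_inner: "w \<in> V" "w \<notin> leaves V ET"
    and w_farthest: "\<And>u. u \<in> V \<Longrightarrow> u \<notin> leaves V ET \<Longrightarrow> graph_dist ET r u \<le> graph_dist ET r w"
    and c0_w: "{c 0, w} \<in> ET"
    and last_not_w: "{c (n - 1), w} \<notin> ET"
begin

abbreviation "L \<equiv> leaves V ET"
abbreviation "depth \<equiv> graph_dist ET r"

lemma simple_ET: "simple_graph V ET" and connected_ET: "graph_connected V ET" and finite_V: "finite V"
  using tree unfolding is_tree_def simple_graph_def by auto

lemma tree_edgeD: "{u, v} \<in> ET \<Longrightarrow> u \<in> V \<and> v \<in> V \<and> u \<noteq> v"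
  using simple_graph_edgeD[OF simple_ET] .

lemma leaves_subset: "L \<subseteq> V"
  unfolding leaves_def by blast

lemma c_leaf: "i < n \<Longrightarrow> c i \<in> L"
  using leaf_enum unfolding bij_betw_def by auto

lemma leaf_enumE: "b \<in> L \<Longrightarrow> (\<And>i. i < n \<Longrightarrow> b = c i \<Longrightarrow> thesis) \<Longrightarrow> thesis"
  using leaf_enum unfolding bij_betw_def by auto

lemma leaf_nbr_inner: "b \<in> L \<Longrightarrow> {b, u} \<in> ET \<Longrightarrow> u \<notin> L"
  using adjacent_leaves_span[OF connected_ET _ _ _ r_inner(1)] r_inner(2) by blast

lemma c0_nbr: "{c 0, u} \<in> ET \<Longrightarrow> u = w"
  using leaf_nbrs_eq[OF c_leaf, of 0 u w] c0_w n3 unfolding nbrs_def by (simp add: insert_commute)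

lemma cycle_edge_not_tree_edge: "e \<in> cycle_edges c n \<Longrightarrow> e \<notin> ET"
  unfolding cycle_edges_def using leaf_nbr_inner c_leaf n3 by fastforce

definition w_leaf_idx :: "nat set" where
  "w_leaf_idx = {j. 0 < j \<and> j < n \<and> {c j, w} \<in> ET}"

sublocale hub_setting c n w w_leaf_idx
proof
  show "inj_on c {..<n}" using leaf_enum unfolding bij_betw_def by simp
  show "w \<notin> c ` {..<n}" using c_leaf w_inner(2) by blast
  show "0 < j \<and> j < n - 1" if "j \<in> w_leaf_idx" for j
    using that last_not_w unfolding w_leaf_idx_def by (cases "j = n - 1") auto
qed (rule n3)

lemma outer_arcs_leaves: "outer_arcs cyclic c n \<subseteq> L \<times> L"
  using c_leaf by (auto elim!: outer_arcsE)

definition tree_arcs :: "('a \<times> 'a) set" where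
  "tree_arcs = {(u, v). {u, v} \<in> ET \<and> u \<notin> L \<and> v \<notin> L \<and> depth v < depth u}"

definition leaf_arcs :: "('a \<times> 'a) set" where
  "leaf_arcs = {(b, u). {b, u} \<in> ET \<and> b \<in> L \<and> b \<noteq> c 0}"

definition halin_arcs :: "bool \<Rightarrow> ('a \<times> 'a) set" where
  "halin_arcs cyclic = tree_arcs \<union> leaf_arcs \<union> {(w, c 0)} \<union> outer_arcs cyclic c n"

lemma tree_edge_arc_iff:
  assumes "{u, v} \<in> ET"
  shows "(u, v) \<in> tree_arcs \<union> leaf_arcs \<union> {(w, c 0)} \<longleftrightarrow>
    (if u \<in> L then u \<noteq> c 0 else if v \<in> L then v = c 0 else depth v < depth u)"
  using assms leaf_nbr_inner[of u v] c0_nbr[of u] c_leaf[of 0] n3 w_inner(2)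
  unfolding tree_arcs_def leaf_arcs_def by (auto simp: insert_commute)

lemma orientation_halin_arcs: "orientation V (ET \<union> cycle_edges c n) (halin_arcs cyclic)"
  unfolding orientation_def
proof (intro conjI allI impI)
  show "\<forall>(u, v)\<in>halin_arcs cyclic. {u, v} \<in> ET \<union> cycle_edges c n"
    unfolding halin_arcs_def tree_arcs_def leaf_arcs_def
    using c0_w outer_arc_cycle_edge by (auto simp: insert_commute)
next
  fix u v assume "{u, v} \<in> ET \<union> cycle_edges c n"
  then consider (tree_edge) "{u, v} \<in> ET" | (cycle_edge) "{u, v} \<in> cycle_edges c n" "{u, v} \<notin> ET" by blast
  thus "(u, v) \<in> halin_arcs cyclic \<longleftrightarrow> (v, u) \<notin> halin_arcs cyclic"
  proof cases
    case tree_edge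
    hence vu: "{v, u} \<in> ET" by (simp add: insert_commute)
    have "(x, y) \<notin> outer_arcs cyclic c n" if "{x, y} = {u, v}" for x y
      using outer_arc_cycle_edge cycle_edge_not_tree_edge tree_edge that by metis
    moreover have "depth u \<noteq> depth v" by (rule tree_graph_dist_edge_neq[OF tree r_inner(1) tree_edge])
    moreover have "\<not> (u \<in> L \<and> v \<in> L)" using leaf_nbr_inner tree_edge by blast
    ultimately show ?thesis
      using tree_edge_arc_iff[OF tree_edge] tree_edge_arc_iff[OF vu] unfolding halin_arcs_def
      by (auto simp: insert_commute split: if_splits)
  next
    case cycle_edge
    hence "(x, y) \<notin> tree_arcs \<union> leaf_arcs \<union> {(w, c 0)}" if "{x, y} = {u, v}" for x y
      using that c0_w unfolding tree_arcs_def leaf_arcs_def by (auto simp: insert_commute)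
    thus ?thesis using outer_arcs_orient[OF cycle_edge(1)] unfolding halin_arcs_def by auto
  qed
qed

lemma simple_graph_halin: "simple_graph V (ET \<union> cycle_edges c n)"
  unfolding simple_graph_def
proof (intro conjI ballI)
  fix e assume "e \<in> ET \<union> cycle_edges c n"
  then consider "e \<in> ET" | i where "i < n" "e = {c i, c (Suc i mod n)}"
    unfolding cycle_edges_def by blast
  thus "\<exists>u v. e = {u, v} \<and> u \<noteq> v \<and> u \<in> V \<and> v \<in> V"
  proof cases
    case 1
    thus ?thesis using simple_ET unfolding simple_graph_def by blast
  next
    case (2 i)
    moreover have "Suc i mod n < n" "Suc i mod n \<noteq> i" using 2(1) n3 by (auto simp: mod_Suc)
    ultimately show ?thesis using c_leaf leaves_subset c_eq_iff by blast
  qed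
qed (rule finite_V)

lemma finite_halin_arcs: "finite (halin_arcs cyclic)"
  using orientation_subset[OF orientation_halin_arcs simple_graph_halin]
    finite_cartesian_product[OF finite_V finite_V] by (rule finite_subset)

lemma outdeg_halin_arcs_le_2:
  assumes "v \<in> V"
  shows "outdeg (halin_arcs cyclic) v \<le> 2"
proof -
  let ?out = "{y. (v, y) \<in> halin_arcs cyclic}"
  show ?thesis
  proof (cases "v \<in> L")
    case False
    let ?P = "{x. {v, x} \<in> ET \<and> depth x < depth v}"
    have "?out \<subseteq> ?P \<union> {c 0}"
      using False c_leaf unfolding halin_arcs_def tree_arcs_def leaf_arcs_def by (auto elim: outer_arcsE)
    moreover have "finite ?P"
      using simple_graph_finite_nbrs[OF simple_ET, of v] by (rule finite_subset[rotated]) (auto simp: nbrs_def insert_commute)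
    ultimately have "card ?out \<le> card (?P \<union> {c 0})" by (intro card_mono) auto
    also have "\<dots> \<le> card ?P + 1" using card_Un_le[of ?P "{c 0}"] by simp
    finally show ?thesis using tree_card_parents_le_1[OF tree r_inner(1), of v] unfolding outdeg_def by linarith
  next
    case True
    then obtain i where i: "i < n" "v = c i" by (rule leaf_enumE)
    let ?T = "if i = 0 then {} else nbrs ET v" and ?C = "{y. (c i, y) \<in> outer_arcs cyclic c n}"
    have "?out \<subseteq> ?T \<union> ?C"
      using True i w_inner(2) unfolding halin_arcs_def tree_arcs_def leaf_arcs_def nbrs_def
      by (auto simp: insert_commute)
    moreover have "finite ?T" using simple_graph_finite_nbrs[OF simple_ET] by simp
    moreover have "finite ?C" using finite_out_nbrs[OF finite_outer_arcs] .
    ultimately have "card ?out \<le> card ?T + card ?C" by (meson card_Un_le card_mono finite_UnI le_trans)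
    moreover have "card (nbrs ET v) = 1" using True unfolding leaves_def deg_def by simp
    ultimately show ?thesis using card_out_outer_arcs[OF i(1), of cyclic] unfolding outdeg_def
      by (auto split: if_splits)
  qed
qed

text \<open>Since w is a farthest inner vertex, the leaves and w lie strictly above all other inner
  vertices.\<close>
definition height :: "'a \<Rightarrow> nat" where
  "height v = (if v \<in> L \<or> v = w then Suc (depth w) else depth v)"

lemma height_inner: "v \<in> V \<Longrightarrow> v \<notin> L \<Longrightarrow> v \<noteq> w \<Longrightarrow> height v < height w"
  using w_farthest unfolding height_def by (simp add: le_imp_less_Suc)

lemma height_tree_arc:
  assumes "(u, v) \<in> tree_arcs"
  shows "height v < height u"
proof -
  have e: "{u, v} \<in> ET" "u \<notin> L" "v \<notin> L" "depth v < depth u" using assms unfolding tree_arcs_def by auto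
  have "depth u \<le> depth w" using w_farthest e(2) tree_edgeD[OF e(1)] by blast
  hence "v \<noteq> w" using e(4) by auto
  thus ?thesis using e \<open>depth u \<le> depth w\<close> unfolding height_def by auto
qed

lemma height_antimono:
  assumes "(u, v) \<in> halin_arcs cyclic"
  shows "height v \<le> height u"
proof -
  have top: "height x \<le> height y" if "x \<in> V" "y \<in> L" for x y
    using that height_inner[of x] unfolding height_def by (cases "x \<in> L \<or> x = w") auto
  have "(u, v) \<in> tree_arcs \<or> (u \<in> L \<and> v \<in> V) \<or> (u = w \<and> v \<in> L)"
    using assms c_leaf[of 0] outer_arcs_leaves leaves_subset n3 tree_edgeD
    unfolding halin_arcs_def leaf_arcs_def by auto
  thus ?thesis using height_tree_arc top unfolding height_def by fastforce
qed

lemma hub_arcs_subset_halin_arcs: "hub_arcs cyclic c n w w_leaf_idx \<subseteq> halin_arcs cyclic"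
proof -
  have "(c j, w) \<in> leaf_arcs" if "j \<in> w_leaf_idx" for j
    using that c_leaf c_eq_iff[of j 0] unfolding w_leaf_idx_def leaf_arcs_def by auto
  thus ?thesis unfolding hub_arcs_def halin_arcs_def by blast
qed

lemma eulerian_sub_halin_arcs_iff:
  "eulerian_sub (halin_arcs cyclic) A \<longleftrightarrow> A \<subseteq> hub_arcs cyclic c n w w_leaf_idx \<and> balanced A"
  unfolding eulerian_sub_iff_balanced
proof (intro iffI conjI; (elim conjE)?)
  assume sub: "A \<subseteq> halin_arcs cyclic" and bal: "balanced A"
  have finA: "finite A" using sub finite_halin_arcs finite_subset by blast
  have "(u, v) \<in> hub_arcs cyclic c n w w_leaf_idx" if uv: "(u, v) \<in> A" for u v
  proof -
    have level: "height u = height v"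
      using balanced_potential_const[OF finA bal _ uv] height_antimono sub by blast
    hence "(u, v) \<notin> tree_arcs" using height_tree_arc by fastforce
    moreover have "(u, v) \<in> (\<lambda>j. (c j, w)) ` w_leaf_idx" if "(u, v) \<in> leaf_arcs"
    proof -
      have e: "{u, v} \<in> ET" "u \<in> L" "u \<noteq> c 0" using that unfolding leaf_arcs_def by auto
      then obtain j where j: "j < n" "u = c j" by (blast elim: leaf_enumE)
      have "v = w"
        using height_inner[of v] level e leaf_nbr_inner tree_edgeD unfolding height_def by (auto split: if_splits)
      thus ?thesis using e j unfolding w_leaf_idx_def by (cases j) auto
    qed
    ultimately show ?thesis using sub uv unfolding halin_arcs_def hub_arcs_def by blast
  qed
  thus "A \<subseteq> hub_arcs cyclic c n w w_leaf_idx" by auto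
qed (use hub_arcs_subset_halin_arcs in auto)

lemma card_eulerian_sub_halin_arcs:
  "card {A. eulerian_sub (halin_arcs cyclic) A} = card w_leaf_idx + (if cyclic then 2 else 1)"
  unfolding eulerian_sub_halin_arcs_iff by (rule card_balanced_hub_subsets)

lemma card_halin_edges: "card (ET \<union> cycle_edges c n) = card V - 1 + n"
proof -
  have "finite ET" "finite (cycle_edges c n)"
    using simple_graph_finite_edges[OF simple_graph_halin] by auto
  moreover have "ET \<inter> cycle_edges c n = {}" using cycle_edge_not_tree_edge by blast
  ultimately show ?thesis using card_Un_disjoint card_cycle_edges tree unfolding is_tree_def by metis
qed

theorem AT_halin_eq_3: "AT V (ET \<union> cycle_edges c n) = 3"
proof (rule AT_eqI)
  let ?D = "halin_arcs (odd (card w_leaf_idx))"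
  show "orientation V (ET \<union> cycle_edges c n) ?D" by (rule orientation_halin_arcs)
  show "\<forall>v\<in>V. outdeg ?D v + 1 \<le> 3" using outdeg_halin_arcs_le_2 by fastforce
  show "num_even_eulerian ?D \<noteq> num_odd_eulerian ?D"
    by (rule num_even_eulerian_neq_odd[OF finite_halin_arcs]) (simp add: card_eulerian_sub_halin_arcs)
next
  fix D assume D: "orientation V (ET \<union> cycle_edges c n) D"
  show "\<exists>v\<in>V. 3 \<le> outdeg D v + 1"
  proof (rule ccontr)
    assume "\<not> ?thesis"
    hence "card (ET \<union> cycle_edges c n) \<le> 1 * card V"
      by (intro orientation_card_edges_le[OF D simple_graph_halin]) auto
    moreover have "card V > 0" using finite_V r_inner(1) by (auto simp: card_gt_0_iff)
    ultimately show False using card_halin_edges n3 by simp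
  qed
qed

end

section \<open>Relabelling the leaves\<close>

lemma cyclic_boundary:
  fixes P :: "nat \<Rightarrow> bool"
  assumes "i1 < n" "P i1" "j < n" "\<not> P j"
  obtains i0 where "i0 < n" "P i0" "\<not> P ((i0 + n - 1) mod n)"
proof -
  let ?Q = "\<lambda>d. P ((j + d) mod n)"
  have "?Q (i1 + n - j)" using assms(1-3) by simp
  define d0 where "d0 = (LEAST d. ?Q d)"
  have q0: "?Q d0" unfolding d0_def using \<open>?Q (i1 + n - j)\<close> by (rule LeastI)
  have "d0 \<noteq> 0" using q0 assms(3,4) by (intro notI) simp
  hence "\<not> ?Q (d0 - 1)" unfolding d0_def by (metis diff_less not_less_Least zero_less_one neq0_conv d0_def)
  moreover have "((j + d0) mod n + n - 1) mod n = (j + (d0 - 1)) mod n"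
  proof -
    have "((j + d0) mod n + n - 1) mod n = ((j + d0) mod n + (n - 1)) mod n" using assms(3) by simp
    also have "\<dots> = (j + d0 + (n - 1)) mod n" by (simp add: mod_add_left_eq)
    also have "j + d0 + (n - 1) = j + (d0 - 1) + n" using \<open>d0 \<noteq> 0\<close> assms(3) by simp
    finally show ?thesis by simp
  qed
  moreover have "(j + d0) mod n < n" using assms(3) by simp
  ultimately show thesis using that q0 by metis
qed

lemma bij_betw_add_mod:
  fixes i0 n :: nat
  assumes "i0 < n"
  shows "bij_betw (\<lambda>i. (i + i0) mod n) {..<n} {..<n}"
proof -
  have "(\<lambda>i. (i + i0) mod n) ` {..<n} = {..<n}"
  proof (intro equalityI subsetI)
    fix k assume k: "k \<in> {..<n}"
    have "((k + n - i0) mod n + i0) mod n = k"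
      using assms k by (simp add: mod_add_left_eq)
    moreover have "(k + n - i0) mod n < n" using assms by simp
    ultimately show "k \<in> (\<lambda>i. (i + i0) mod n) ` {..<n}" by (metis imageI lessThan_iff)
  qed (use assms in auto)
  thus ?thesis by (simp add: bij_betw_def eq_card_imp_inj_on)
qed

lemma cycle_edges_rotate:
  assumes "i0 < n"
  shows "cycle_edges (\<lambda>i. c ((i + i0) mod n)) n = cycle_edges c n"
proof -
  let ?edge = "\<lambda>k. {c k, c (Suc k mod n)}"
  have "(Suc i mod n + i0) mod n = Suc ((i + i0) mod n) mod n" for i
    by (simp add: mod_add_left_eq mod_Suc_eq)
  hence "cycle_edges (\<lambda>i. c ((i + i0) mod n)) n = ?edge ` ((\<lambda>i. (i + i0) mod n) ` {..<n})"
    unfolding cycle_edges_def by auto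
  also have "\<dots> = cycle_edges c n"
    using bij_betw_add_mod[OF assms] unfolding bij_betw_def cycle_edges_def by auto
  finally show ?thesis .
qed

lemma tree_farthest_inner_vertices:
  assumes t: "is_tree V E" and nd2: "\<forall>v\<in>V. deg E v \<noteq> 2"
    and r0: "r0 \<in> inner_vertices V E" and u0: "u0 \<in> inner_vertices V E" "u0 \<noteq> r0"
  obtains r w b0 where "r \<in> inner_vertices V E" "w \<in> inner_vertices V E"
    "\<And>u. u \<in> inner_vertices V E \<Longrightarrow> graph_dist E r u \<le> graph_dist E r w"
    "2 \<le> card {b \<in> leaves V E. {b, w} \<in> E}" "b0 \<in> leaves V E" "{b0, w} \<notin> E"
proof -
  let ?I = "inner_vertices V E" and ?L = "leaves V E"
  have cn: "graph_connected V E" and finI: "finite ?I"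
    using t unfolding is_tree_def simple_graph_def inner_vertices_def by auto
  have I: "x \<in> ?I \<longleftrightarrow> x \<in> V \<and> x \<notin> ?L" for x unfolding inner_vertices_def by simp
  have far_neq: "x \<noteq> y"
    if "y \<in> ?I" "u \<in> ?I" "u \<noteq> y" "\<And>z. z \<in> ?I \<Longrightarrow> graph_dist E y z \<le> graph_dist E y x" for x y u
  proof
    assume "x = y"
    hence "graph_dist E y u = 0"
      using that(4)[OF that(2)] graph_dist_eq_0_iff[OF cn, of y y] that(1) I by simp
    thus False using graph_dist_eq_0_iff[OF cn, of y u] that(1-3) I by simp
  qed
  obtain r where r: "r \<in> ?I" and rmax: "\<And>u. u \<in> ?I \<Longrightarrow> graph_dist E r0 u \<le> graph_dist E r0 r"
    using ex_max_on_finite[OF finI r0] by blast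
  have "r \<noteq> r0" using far_neq[OF r0 u0] rmax by blast
  obtain w where w: "w \<in> ?I" and wmax: "\<And>u. u \<in> ?I \<Longrightarrow> graph_dist E r u \<le> graph_dist E r w"
    using ex_max_on_finite[OF finI r] by blast
  have "w \<noteq> r" using far_neq[OF r r0] \<open>r \<noteq> r0\<close> wmax by blast
  have "2 \<le> card {b \<in> ?L. {b, r} \<in> E}"
    using farthest_inner_vertex_leaf_nbrs[OF t nd2, of r0 r] r0 r \<open>r \<noteq> r0\<close> rmax I by blast
  then obtain b0 where b0: "b0 \<in> ?L" "{b0, r} \<in> E"
    by (metis (no_types, lifting) Collect_empty_eq card.empty not_numeral_le_zero)
  have "{b0, w} \<notin> E"
    using leaf_nbrs_eq[OF b0(1), of w r] b0(2) \<open>w \<noteq> r\<close> unfolding nbrs_def by (auto simp: insert_commute)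
  moreover have "2 \<le> card {b \<in> ?L. {b, w} \<in> E}"
    using farthest_inner_vertex_leaf_nbrs[OF t nd2, of r w] r w \<open>w \<noteq> r\<close> wmax I by blast
  ultimately show thesis using that[OF r w wmax _ b0(1)] by blast
qed

lemma halin_config_exists:
  assumes h: "is_halin V ET c n" and nw: "\<not> is_wheel_halin V ET"
  obtains c' r w where "halin_config V ET c' n r w" "cycle_edges c' n = cycle_edges c n"
proof -
  have t: "is_tree V ET" and nd2: "\<forall>v\<in>V. deg ET v \<noteq> 2" and bij: "bij_betw c {..<n} (leaves V ET)"
    and "\<exists>v\<in>V. 3 \<le> deg ET v" using h unfolding is_halin_def by auto
  let ?L = "leaves V ET" and ?I = "inner_vertices V ET"
  have I: "x \<in> ?I \<longleftrightarrow> x \<in> V \<and> x \<notin> ?L" for x unfolding inner_vertices_def by simp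
  obtain r0 where r0: "r0 \<in> ?I" using \<open>\<exists>v\<in>V. 3 \<le> deg ET v\<close> unfolding I leaves_def by force
  moreover have "?I \<noteq> {r0}" using nw unfolding is_wheel_halin_def by auto
  ultimately obtain u0 where u0: "u0 \<in> ?I" "u0 \<noteq> r0" by blast
  obtain r w b0 where r: "r \<in> ?I" and w: "w \<in> ?I"
    and wmax: "\<And>u. u \<in> ?I \<Longrightarrow> graph_dist ET r u \<le> graph_dist ET r w"
    and Lw: "2 \<le> card {b \<in> ?L. {b, w} \<in> ET}" and b0: "b0 \<in> ?L" "{b0, w} \<notin> ET"
    using tree_farthest_inner_vertices[OF t nd2 r0 u0] by blast
  define Lw where "Lw = {b \<in> ?L. {b, w} \<in> ET}"
  have "finite ?L" using t unfolding is_tree_def simple_graph_def leaves_def by simp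
  hence "card (insert b0 Lw) \<le> card ?L" using b0(1) unfolding Lw_def by (intro card_mono) auto
  moreover have "card ?L = n" using bij_betw_same_card[OF bij] by simp
  moreover have "finite Lw" using \<open>finite ?L\<close> unfolding Lw_def by simp
  ultimately have n3: "3 \<le> n" using Lw b0(2) unfolding Lw_def by simp
  have "Lw \<noteq> {}" using Lw unfolding Lw_def by (intro notI) simp
  then obtain b1 where "b1 \<in> Lw" by blast
  moreover obtain i1 j where "i1 < n" "c i1 = b1" "j < n" "c j = b0"
    using bij \<open>b1 \<in> Lw\<close> b0(1) unfolding bij_betw_def Lw_def
    by (metis (no_types, lifting) imageE lessThan_iff mem_Collect_eq)
  moreover have "b0 \<notin> Lw" using b0(2) unfolding Lw_def by simp
  ultimately obtain i0 where i0: "i0 < n" "c i0 \<in> Lw" "c ((i0 + n - 1) mod n) \<notin> Lw"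
    using cyclic_boundary[of i1 n "\<lambda>i. c i \<in> Lw" j] by metis
  define c' where "c' = (\<lambda>i. c ((i + i0) mod n))"
  have "halin_config V ET c' n r w"
  proof
    show "bij_betw c' {..<n} ?L"
      unfolding c'_def using bij_betw_trans[OF bij_betw_add_mod[OF i0(1)] bij] by (simp add: comp_def)
    have "c' (n - 1) = c ((i0 + n - 1) mod n)" unfolding c'_def using n3 by (simp add: add.commute)
    moreover have "c ((i0 + n - 1) mod n) \<in> ?L" using bij n3 unfolding bij_betw_def by auto
    ultimately show "{c' (n - 1), w} \<notin> ET" using i0(3) unfolding Lw_def by simp
    show "{c' 0, w} \<in> ET" using i0(1,2) unfolding c'_def Lw_def by simp
  qed (use t n3 r w wmax I in auto)
  moreover have "cycle_edges c' n = cycle_edges c n" unfolding c'_def by (rule cycle_edges_rotate[OF i0(1)])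
  ultimately show thesis by (rule that)
qed

theorem lemma3p6:
  fixes V :: "'a set" and ET :: "'a set set" and c :: "nat \<Rightarrow> 'a" and n :: nat
  assumes "is_halin V ET c n"
    and "odd n"
    and "\<not> is_wheel_halin V ET"
  shows "AT V (ET \<union> cycle_edges c n) = 3"
proof -
  obtain c' r w where "halin_config V ET c' n r w" "cycle_edges c' n = cycle_edges c n"
    using halin_config_exists[OF assms(1,3)] by blast
  thus ?thesis using halin_config.AT_halin_eq_3 by metis
qed

end
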